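(* Let $G$ be a group with identity $1_G$ and let $\mathcal{B}_1,\mathcal{B}_2:G\to G$ be arbitrary maps. Let $a\circ b=\mathcal{B}_1(a)b\mathcal{B}_2(a)$, and for $a\in G$ define inner automorphisms $\lambda_a,\mu_a$ of $G$ by $\lambda_a(b)=\mathcal{B}_2(a)^{-1}b\mathcal{B}_2(a)$ and $\mu_a(b)=\mathcal{B}_1(a)b\mathcal{B}_1(a)^{-1}$. The following are equivalent: (i) $\circ$ is associative (and then $(G,\cdot,\circ,\Phi)$ is a skew truss with $\Phi(a)=\mathcal{B}_1(a)\mathcal{B}_2(a)$); (ii) $\lambda_a\lambda_b=\lambda_{a\circ b}$ and $(a\circ b)\circ 1_G=a\circ(b\circ 1_G)$ for all $a,b\in G$; (iii) $\mu_a\mu_b=\mu_{a\circ b}$ and $(a\circ b)\circ 1_G=a\circ(b\circ 1_G)$ for all $a,b\in G$.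
   Context: A skew (left) truss is a quadruple $(G,\cdot,\circ,\Phi)$ where $(G,\cdot)$ is a group, $\circ$ is an associative binary operation on $G$, and $\Phi:G\to G$ is a map with $a\circ(b\cdot c)=(a\circ b)\cdot\Phi(a)^{-1}\cdot(a\circ c)$ for all $a,b,c\in G$. *)

theory Defs
  imports "HOL-Algebra.Group"
begin

definition skew_truss ::
  "('a, 'b) monoid_scheme \<Rightarrow> ('a \<Rightarrow> 'a \<Rightarrow> 'a) \<Rightarrow> ('a \<Rightarrow> 'a) \<Rightarrow> bool" where
  "skew_truss G circ Phi \<longleftrightarrow>
     group G
   \<and> (\<forall>a\<in>carrier G. \<forall>b\<in>carrier G. circ a b \<in> carrier G)
   \<and> (\<forall>a\<in>carrier G. \<forall>b\<in>carrier G. \<forall>c\<in>carrier G.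
        circ (circ a b) c = circ a (circ b c))
   \<and> (\<forall>a\<in>carrier G. Phi a \<in> carrier G)
   \<and> (\<forall>a\<in>carrier G. \<forall>b\<in>carrier G. \<forall>c\<in>carrier G.
        circ a (b \<otimes>\<^bsub>G\<^esub> c) = circ a b \<otimes>\<^bsub>G\<^esub> inv\<^bsub>G\<^esub> (Phi a) \<otimes>\<^bsub>G\<^esub> circ a c)"

definition bcirc :: "('a, 'b) monoid_scheme \<Rightarrow> ('a \<Rightarrow> 'a) \<Rightarrow> ('a \<Rightarrow> 'a) \<Rightarrow> 'a \<Rightarrow> 'a \<Rightarrow> 'a" where
  "bcirc G B1 B2 a b = B1 a \<otimes>\<^bsub>G\<^esub> b \<otimes>\<^bsub>G\<^esub> B2 a"

definition lam :: "('a, 'b) monoid_scheme \<Rightarrow> ('a \<Rightarrow> 'a) \<Rightarrow> 'a \<Rightarrow> 'a \<Rightarrow> 'a" where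
  "lam G B2 a b = inv\<^bsub>G\<^esub> (B2 a) \<otimes>\<^bsub>G\<^esub> b \<otimes>\<^bsub>G\<^esub> B2 a"

definition mu :: "('a, 'b) monoid_scheme \<Rightarrow> ('a \<Rightarrow> 'a) \<Rightarrow> 'a \<Rightarrow> 'a \<Rightarrow> 'a" where
  "mu G B1 a b = B1 a \<otimes>\<^bsub>G\<^esub> b \<otimes>\<^bsub>G\<^esub> inv\<^bsub>G\<^esub> (B1 a)"

end

theory Submission
  imports Defs
begin

text \<open>Expanding \<open>a \<circ> b = B\<^sub>1(a) b B\<^sub>2(a)\<close>, associativity at \<open>a, b\<close> says that the two-sided
  multiplications \<open>c \<mapsto> B\<^sub>1(a \<circ> b) c B\<^sub>2(a \<circ> b)\<close> and \<open>c \<mapsto> (B\<^sub>1(a) B\<^sub>1(b)) c (B\<^sub>2(b) B\<^sub>2(a))\<close>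
  coincide, while \<open>\<lambda>\<^sub>a\<lambda>\<^sub>b = \<lambda>\<^bsub>a \<circ> b\<^esub>\<close> and \<open>\<mu>\<^sub>a\<mu>\<^sub>b = \<mu>\<^bsub>a \<circ> b\<^esub>\<close> say that the corresponding right,
  resp. left, conjugations coincide. Since \<open>p c q = (p q)(q\<^sup>-\<^sup>1 c q) = (p c p\<^sup>-\<^sup>1)(p q)\<close>, two maps
  \<open>c \<mapsto> p c q\<close> and \<open>c \<mapsto> s c t\<close> agree exactly when they agree at \<open>1\<close> and their right (or
  left) conjugation parts agree; agreement at \<open>1\<close> is associativity with third argument \<open>1\<close>.\<close>

lemma (in group) mult_inv_cancel_left [simp]:
  "x \<in> carrier G \<Longrightarrow> y \<in> carrier G \<Longrightarrow> x \<otimes> (inv x \<otimes> y) = y"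
  by (simp add: m_assoc[symmetric])

lemma (in group) inv_mult_cancel_left [simp]:
  "x \<in> carrier G \<Longrightarrow> y \<in> carrier G \<Longrightarrow> inv x \<otimes> (x \<otimes> y) = y"
  by (simp add: m_assoc[symmetric])

lemma (in group) two_sided_mult_eq_iff_right_conj:
  assumes [simp]: "p \<in> carrier G" "q \<in> carrier G" "s \<in> carrier G" "t \<in> carrier G"
  shows "(\<forall>c\<in>carrier G. p \<otimes> c \<otimes> q = s \<otimes> c \<otimes> t) \<longleftrightarrow>
    (\<forall>c\<in>carrier G. inv t \<otimes> c \<otimes> t = inv q \<otimes> c \<otimes> q) \<and> p \<otimes> q = s \<otimes> t"
proof -
  have factor: "x \<otimes> c \<otimes> y = (x \<otimes> y) \<otimes> (inv y \<otimes> c \<otimes> y)"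
    if "x \<in> carrier G" "y \<in> carrier G" "c \<in> carrier G" for x y c
    using that by (simp add: m_assoc)
  show ?thesis
  proof (intro iffI conjI ballI)
    assume H: "\<forall>c\<in>carrier G. p \<otimes> c \<otimes> q = s \<otimes> c \<otimes> t"
    show pq: "p \<otimes> q = s \<otimes> t" using H[rule_format, of \<one>] by simp
    fix c assume c [simp]: "c \<in> carrier G"
    have "(s \<otimes> t) \<otimes> (inv t \<otimes> c \<otimes> t) = (p \<otimes> q) \<otimes> (inv q \<otimes> c \<otimes> q)"
      using H[rule_format, OF c] factor[of p q c] factor[of s t c] by simp
    then show "inv t \<otimes> c \<otimes> t = inv q \<otimes> c \<otimes> q" by (simp add: pq)
  next
    fix c assume "(\<forall>c\<in>carrier G. inv t \<otimes> c \<otimes> t = inv q \<otimes> c \<otimes> q) \<and> p \<otimes> q = s \<otimes> t"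
      and "c \<in> carrier G"
    then show "p \<otimes> c \<otimes> q = s \<otimes> c \<otimes> t" using factor[of p q c] factor[of s t c] by simp
  qed
qed

lemma (in group) two_sided_mult_eq_iff_left_conj:
  assumes [simp]: "p \<in> carrier G" "q \<in> carrier G" "s \<in> carrier G" "t \<in> carrier G"
  shows "(\<forall>c\<in>carrier G. p \<otimes> c \<otimes> q = s \<otimes> c \<otimes> t) \<longleftrightarrow>
    (\<forall>c\<in>carrier G. s \<otimes> c \<otimes> inv s = p \<otimes> c \<otimes> inv p) \<and> p \<otimes> q = s \<otimes> t"
proof -
  have factor: "x \<otimes> c \<otimes> y = (x \<otimes> c \<otimes> inv x) \<otimes> (x \<otimes> y)"
    if "x \<in> carrier G" "y \<in> carrier G" "c \<in> carrier G" for x y c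
    using that by (simp add: m_assoc)
  show ?thesis
  proof (intro iffI conjI ballI)
    assume H: "\<forall>c\<in>carrier G. p \<otimes> c \<otimes> q = s \<otimes> c \<otimes> t"
    show pq: "p \<otimes> q = s \<otimes> t" using H[rule_format, of \<one>] by simp
    fix c assume c [simp]: "c \<in> carrier G"
    have "(s \<otimes> c \<otimes> inv s) \<otimes> (s \<otimes> t) = (p \<otimes> c \<otimes> inv p) \<otimes> (p \<otimes> q)"
      using H[rule_format, OF c] factor[of p q c] factor[of s t c] by simp
    then show "s \<otimes> c \<otimes> inv s = p \<otimes> c \<otimes> inv p" by (simp add: pq)
  next
    fix c assume "(\<forall>c\<in>carrier G. s \<otimes> c \<otimes> inv s = p \<otimes> c \<otimes> inv p) \<and> p \<otimes> q = s \<otimes> t"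
      and "c \<in> carrier G"
    then show "p \<otimes> c \<otimes> q = s \<otimes> c \<otimes> t" using factor[of p q c] factor[of s t c] by simp
  qed
qed

locale bimultiplication = group G for G :: "('a, 'b) monoid_scheme" (structure) +
  fixes B1 B2 :: "'a \<Rightarrow> 'a"
  assumes B1_closed: "B1 \<in> carrier G \<rightarrow> carrier G"
    and B2_closed: "B2 \<in> carrier G \<rightarrow> carrier G"
begin

lemma B1_in_carrier [simp]: "a \<in> carrier G \<Longrightarrow> B1 a \<in> carrier G"
  using B1_closed by blast

lemma B2_in_carrier [simp]: "a \<in> carrier G \<Longrightarrow> B2 a \<in> carrier G"
  using B2_closed by blast

lemma bcirc_closed [simp]:
  "a \<in> carrier G \<Longrightarrow> b \<in> carrier G \<Longrightarrow> bcirc G B1 B2 a b \<in> carrier G"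
  by (simp add: bcirc_def)

lemma bcirc_assoc_iff:
  assumes "a \<in> carrier G" "b \<in> carrier G" "c \<in> carrier G"
  defines "ab \<equiv> bcirc G B1 B2 a b"
  shows "bcirc G B1 B2 ab c = bcirc G B1 B2 a (bcirc G B1 B2 b c) \<longleftrightarrow>
    B1 ab \<otimes> c \<otimes> B2 ab = (B1 a \<otimes> B1 b) \<otimes> c \<otimes> (B2 b \<otimes> B2 a)"
  using assms by (simp add: bcirc_def m_assoc)

lemma lam_lam:
  assumes "a \<in> carrier G" "b \<in> carrier G" "c \<in> carrier G"
  shows "lam G B2 a (lam G B2 b c) = inv (B2 b \<otimes> B2 a) \<otimes> c \<otimes> (B2 b \<otimes> B2 a)"
  using assms by (simp add: lam_def m_assoc inv_mult_group)

lemma mu_mu: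
  assumes "a \<in> carrier G" "b \<in> carrier G" "c \<in> carrier G"
  shows "mu G B1 a (mu G B1 b c) = (B1 a \<otimes> B1 b) \<otimes> c \<otimes> inv (B1 a \<otimes> B1 b)"
  using assms by (simp add: mu_def m_assoc inv_mult_group)

lemma bcirc_assoc_at_iff_lam:
  assumes "a \<in> carrier G" "b \<in> carrier G"
  defines "ab \<equiv> bcirc G B1 B2 a b"
  shows "(\<forall>c\<in>carrier G. bcirc G B1 B2 ab c = bcirc G B1 B2 a (bcirc G B1 B2 b c)) \<longleftrightarrow>
    (\<forall>c\<in>carrier G. lam G B2 a (lam G B2 b c) = lam G B2 ab c) \<and>
    bcirc G B1 B2 ab \<one> = bcirc G B1 B2 a (bcirc G B1 B2 b \<one>)"
  using assms(1,2) two_sided_mult_eq_iff_right_conj[of "B1 ab" "B2 ab" "B1 a \<otimes> B1 b" "B2 b \<otimes> B2 a"]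
  by (simp add: ab_def bcirc_assoc_iff lam_lam lam_def[of G B2 "bcirc G B1 B2 a b"])

lemma bcirc_assoc_at_iff_mu:
  assumes "a \<in> carrier G" "b \<in> carrier G"
  defines "ab \<equiv> bcirc G B1 B2 a b"
  shows "(\<forall>c\<in>carrier G. bcirc G B1 B2 ab c = bcirc G B1 B2 a (bcirc G B1 B2 b c)) \<longleftrightarrow>
    (\<forall>c\<in>carrier G. mu G B1 a (mu G B1 b c) = mu G B1 ab c) \<and>
    bcirc G B1 B2 ab \<one> = bcirc G B1 B2 a (bcirc G B1 B2 b \<one>)"
  using assms(1,2) two_sided_mult_eq_iff_left_conj[of "B1 ab" "B2 ab" "B1 a \<otimes> B1 b" "B2 b \<otimes> B2 a"]
  by (simp add: ab_def bcirc_assoc_iff mu_mu mu_def[of G B1 "bcirc G B1 B2 a b"])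

lemma bcirc_assoc_iff_lam:
  "(\<forall>a\<in>carrier G. \<forall>b\<in>carrier G. \<forall>c\<in>carrier G.
      bcirc G B1 B2 (bcirc G B1 B2 a b) c = bcirc G B1 B2 a (bcirc G B1 B2 b c)) \<longleftrightarrow>
    (\<forall>a\<in>carrier G. \<forall>b\<in>carrier G. \<forall>c\<in>carrier G.
      lam G B2 a (lam G B2 b c) = lam G B2 (bcirc G B1 B2 a b) c) \<and>
    (\<forall>a\<in>carrier G. \<forall>b\<in>carrier G.
      bcirc G B1 B2 (bcirc G B1 B2 a b) \<one> = bcirc G B1 B2 a (bcirc G B1 B2 b \<one>))"
  by (simp add: bcirc_assoc_at_iff_lam ball_conj_distrib)

lemma bcirc_assoc_iff_mu:
  "(\<forall>a\<in>carrier G. \<forall>b\<in>carrier G. \<forall>c\<in>carrier G.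
      bcirc G B1 B2 (bcirc G B1 B2 a b) c = bcirc G B1 B2 a (bcirc G B1 B2 b c)) \<longleftrightarrow>
    (\<forall>a\<in>carrier G. \<forall>b\<in>carrier G. \<forall>c\<in>carrier G.
      mu G B1 a (mu G B1 b c) = mu G B1 (bcirc G B1 B2 a b) c) \<and>
    (\<forall>a\<in>carrier G. \<forall>b\<in>carrier G.
      bcirc G B1 B2 (bcirc G B1 B2 a b) \<one> = bcirc G B1 B2 a (bcirc G B1 B2 b \<one>))"
  by (simp add: bcirc_assoc_at_iff_mu ball_conj_distrib)

lemma bcirc_skew_distrib:
  assumes "a \<in> carrier G" "b \<in> carrier G" "c \<in> carrier G"
  shows "bcirc G B1 B2 a (b \<otimes> c) =
    bcirc G B1 B2 a b \<otimes> inv (B1 a \<otimes> B2 a) \<otimes> bcirc G B1 B2 a c"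
  using assms by (simp add: bcirc_def m_assoc inv_mult_group)

lemma skew_truss_bcirc:
  assumes "\<forall>a\<in>carrier G. \<forall>b\<in>carrier G. \<forall>c\<in>carrier G.
    bcirc G B1 B2 (bcirc G B1 B2 a b) c = bcirc G B1 B2 a (bcirc G B1 B2 b c)"
  shows "skew_truss G (bcirc G B1 B2) (\<lambda>a. B1 a \<otimes> B2 a)"
  using assms is_group by (simp add: skew_truss_def bcirc_skew_distrib)

end

theorem theorem3p4:
  fixes G :: "('a, 'b) monoid_scheme" and B1 B2 :: "'a \<Rightarrow> 'a"
  assumes "group G"
    and "B1 \<in> carrier G \<rightarrow> carrier G"
    and "B2 \<in> carrier G \<rightarrow> carrier G"
  defines "circ \<equiv> bcirc G B1 B2"
  shows "((\<forall>a\<in>carrier G. \<forall>b\<in>carrier G. \<forall>c\<in>carrier G.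
             circ (circ a b) c = circ a (circ b c))
          \<longleftrightarrow>
          ((\<forall>a\<in>carrier G. \<forall>b\<in>carrier G. \<forall>c\<in>carrier G.
              lam G B2 a (lam G B2 b c) = lam G B2 (circ a b) c)
           \<and> (\<forall>a\<in>carrier G. \<forall>b\<in>carrier G.
              circ (circ a b) \<one>\<^bsub>G\<^esub> = circ a (circ b \<one>\<^bsub>G\<^esub>))))
       \<and> ((\<forall>a\<in>carrier G. \<forall>b\<in>carrier G. \<forall>c\<in>carrier G.
             circ (circ a b) c = circ a (circ b c))
          \<longleftrightarrow>
          ((\<forall>a\<in>carrier G. \<forall>b\<in>carrier G. \<forall>c\<in>carrier G.
              mu G B1 a (mu G B1 b c) = mu G B1 (circ a b) c)
           \<and> (\<forall>a\<in>carrier G. \<forall>b\<in>carrier G.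
              circ (circ a b) \<one>\<^bsub>G\<^esub> = circ a (circ b \<one>\<^bsub>G\<^esub>))))
       \<and> ((\<forall>a\<in>carrier G. \<forall>b\<in>carrier G. \<forall>c\<in>carrier G.
             circ (circ a b) c = circ a (circ b c))
          \<longrightarrow> skew_truss G circ (\<lambda>a. B1 a \<otimes>\<^bsub>G\<^esub> B2 a))"
proof -
  interpret bimultiplication G B1 B2
    using assms(1-3) by (simp add: bimultiplication_def bimultiplication_axioms_def)
  show ?thesis
    unfolding circ_def using bcirc_assoc_iff_lam bcirc_assoc_iff_mu skew_truss_bcirc by blast
qed

end
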